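(* Let $C$ and $D$ be nonempty convex subsets of a real topological vector space $X$ such that $\operatorname{icr}(C\cap D)=\operatorname{fri}(C\cap D)$. Then: (i) if $C\cap\operatorname{fri} D\neq\emptyset$, then $\operatorname{fri}(C\cap D)\subseteq C\cap\operatorname{fri} D$; (ii) if $\operatorname{fri} C\cap\operatorname{fri} D\neq\emptyset$, then $\operatorname{fri}(C\cap D)\subseteq\operatorname{fri} C\cap\operatorname{fri} D$.
   Context: For a convex set $C$, a convex subset $F\subseteq C$ is a face of $C$ if for every $x\in F$ and all $y,z\in C$ with $x\in(y,z)=\{(1-t)y+tz:t\in(0,1)\}$ we have $y,z\in F$; $F_{\min}(x,C)$ is the intersection of all faces of $C$ containing $x\in C$. The intrinsic core is $\operatorname{icr} C=\{x\in C:\forall y\in C\ \exists z\in C,\ x\in(y,z)\}$ and the face relative interior is $\operatorname{fri} C=\{x\in C: C\subseteq\overline{F_{\min}(x,C)}\}$. *)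

theory Defs
  imports "HOL-Analysis.Analysis"
begin

text \<open>Open segment (y,z) = {(1-t)y + tz : 0 < t < 1}; note (y,y) = {y}.\<close>
definition oseg :: "'a::real_vector \<Rightarrow> 'a \<Rightarrow> 'a set" where
  "oseg y z = {(1 - t) *\<^sub>R y + t *\<^sub>R z | t. 0 < t \<and> t < 1}"

definition is_face :: "'a::real_vector set \<Rightarrow> 'a set \<Rightarrow> bool" where
  "is_face F C \<longleftrightarrow> convex F \<and> F \<subseteq> C \<and>
     (\<forall>x\<in>F. \<forall>y\<in>C. \<forall>z\<in>C. x \<in> oseg y z \<longrightarrow> y \<in> F \<and> z \<in> F)"

definition Fmin :: "'a::real_vector \<Rightarrow> 'a set \<Rightarrow> 'a set" where
  "Fmin x C = \<Inter>{F. is_face F C \<and> x \<in> F}"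

definition icr :: "'a::real_vector set \<Rightarrow> 'a set" where
  "icr C = {x \<in> C. \<forall>y\<in>C. \<exists>z\<in>C. x \<in> oseg y z}"

definition fri :: "'a::{real_vector,topological_space} set \<Rightarrow> 'a set" where
  "fri C = {x \<in> C. C \<subseteq> closure (Fmin x C)}"

end

theory Submission
  imports Defs
begin

text \<open>Neither topology nor convexity plays a role: every point of the intrinsic core of
  \<open>C \<inter> D\<close> lies in an open segment from a point of \<open>C \<inter> fri D\<close> to a point of \<open>D\<close>,
  and a point of such a segment has a minimal face containing that of the endpoint in
  \<open>fri D\<close>, so it lies in \<open>fri D\<close> as well.\<close>

lemma fri_subset: "fri C \<subseteq> C"
  by (auto simp: fri_def)

lemma Fmin_subset_Fmin_oseg:
  assumes "y \<in> D" "z \<in> D" "x \<in> oseg y z"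
  shows "Fmin y D \<subseteq> Fmin x D"
  unfolding Fmin_def
proof (rule Inter_anti_mono, rule subsetI)
  fix F assume "F \<in> {F. is_face F D \<and> x \<in> F}"
  then have "is_face F D" "x \<in> F" by auto
  moreover from this have "y \<in> F"
    using assms unfolding is_face_def by blast
  ultimately show "F \<in> {F. is_face F D \<and> y \<in> F}" by simp
qed

lemma fri_oseg:
  assumes "y \<in> fri D" "z \<in> D" "x \<in> D" "x \<in> oseg y z"
  shows "x \<in> fri D"
proof -
  have "y \<in> D" and D_sub: "D \<subseteq> closure (Fmin y D)"
    using assms(1) by (auto simp: fri_def)
  then have "closure (Fmin y D) \<subseteq> closure (Fmin x D)"
    using assms Fmin_subset_Fmin_oseg closure_mono by metis
  then show ?thesis
    using D_sub assms(3) by (auto simp: fri_def)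
qed

lemma icr_Int_subset_fri:
  assumes "C \<inter> fri D \<noteq> {}"
  shows "icr (C \<inter> D) \<subseteq> fri D"
proof
  fix x assume x: "x \<in> icr (C \<inter> D)"
  from assms obtain y where y: "y \<in> C" "y \<in> fri D" by blast
  then have "y \<in> C \<inter> D" using fri_subset by blast
  then obtain z where "z \<in> C \<inter> D" "x \<in> oseg y z"
    using x unfolding icr_def by blast
  moreover have "x \<in> D" using x by (simp add: icr_def)
  ultimately show "x \<in> fri D" using fri_oseg y(2) by blast
qed

theorem proposition4p6:
  fixes C D :: "'a::{real_vector,topological_space} set"
  assumes add_cont: "continuous_on UNIV (\<lambda>p::'a \<times> 'a. fst p + snd p)"
    and smult_cont: "continuous_on UNIV (\<lambda>p::real \<times> 'a. fst p *\<^sub>R snd p)"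
    and "convex C" and "convex D" and "C \<noteq> {}" and "D \<noteq> {}"
    and "icr (C \<inter> D) = fri (C \<inter> D)"
  shows "(C \<inter> fri D \<noteq> {} \<longrightarrow> fri (C \<inter> D) \<subseteq> C \<inter> fri D) \<and>
         (fri C \<inter> fri D \<noteq> {} \<longrightarrow> fri (C \<inter> D) \<subseteq> fri C \<inter> fri D)"
proof (intro conjI impI)
  assume "C \<inter> fri D \<noteq> {}"
  then show "fri (C \<inter> D) \<subseteq> C \<inter> fri D"
    using icr_Int_subset_fri assms(7) fri_subset by blast
next
  assume "fri C \<inter> fri D \<noteq> {}"
  then have "C \<inter> fri D \<noteq> {}" "D \<inter> fri C \<noteq> {}"
    using fri_subset by blast+
  then have "icr (C \<inter> D) \<subseteq> fri D" "icr (D \<inter> C) \<subseteq> fri C"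
    by (simp_all add: icr_Int_subset_fri)
  then show "fri (C \<inter> D) \<subseteq> fri C \<inter> fri D"
    using assms(7) by (simp add: Int_commute)
qed

end
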